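(* Let $(X,+,d)$ be a complete, locally compact Abelian metric group with translation-invariant metric $d$. Let $A\in K(X)$. If $S(A)=\{0\}$, then the spectre operator $S:K(X)\to K(X)$ is continuous at $A$ with respect to the Pompeiu–Hausdorff metric.
   Context: $d$ satisfies $d(x,y)=d(x+z,y+z)$ for all $x,y,z\in X$; $0$ is the neutral element. $K(X)$ is the family of non-empty compact subsets of $X$ with the Pompeiu–Hausdorff metric $d_H(A,B)=\max\{\sup_{a\in A}d(a,B),\sup_{b\in B}d(A,b)\}$. The spectre of $A\subset X$ is $S(A):=\{z\in X:\ \forall_{a\in A}\ (a+z\in A \text{ or } a-z\in A)\}$; it is compact for compact non-empty $A$. *)

theory Defs
  imports "HOL-Analysis.Analysis"
begin

definition hausdorff_dist :: "'a::metric_space set \<Rightarrow> 'a set \<Rightarrow> real" where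
  "hausdorff_dist A B = max (SUP a\<in>A. infdist a B) (SUP b\<in>B. infdist b A)"

definition spectre :: "'a::ab_group_add set \<Rightarrow> 'a set" where
  "spectre A = {z. \<forall>a\<in>A. a + z \<in> A \<or> a - z \<in> A}"

end

theory Submission
  imports Defs
begin

(* The defect g(z) = sup over a in A of min (d(a + z, A), d(a - z, A)) is positive off the
   spectre of the closed set A and is 1-Lipschitz by translation invariance. If B is delta-close to A and
   z lies in the spectre of B, then g(z) <= 2 delta and z is 2 delta-close to the compact set
   A - A. On the compact part of A - A outside a small ball around 0, g has a positive minimum
   because the spectre of A is {0}; hence the spectre of B lies in a small ball around 0. *)

lemma dist_add_add_le:
  fixes x y x' y' :: "'a::{metric_space, ab_group_add}"
  assumes ti: "\<forall>x y z::'a. dist x y = dist (x + z) (y + z)"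
  shows "dist (x + y) (x' + y') \<le> dist x x' + dist y y'"
proof -
  have "dist (x + y) (x' + y) = dist x x'" using ti by metis
  moreover have "dist (x' + y) (x' + y') = dist y y'" using ti by (metis add.commute)
  ultimately show ?thesis using dist_triangle[of "x + y" "x' + y'" "x' + y"] by linarith
qed

lemma dist_diff_diff_le:
  fixes x y x' y' :: "'a::{metric_space, ab_group_add}"
  assumes ti: "\<forall>x y z::'a. dist x y = dist (x + z) (y + z)"
  shows "dist (x - y) (x' - y') \<le> dist x x' + dist y y'"
proof -
  have "dist (- y) (- y') = dist y y'"
    using ti[rule_format, of "- y" "- y'" "y + y'"] by (simp add: dist_commute)
  then show ?thesis using dist_add_add_le[OF ti, of x "- y" x' "- y'"] by simp
qed

lemma compact_differences_invariant:
  fixes A :: "'a::{metric_space, ab_group_add} set"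
  assumes ti: "\<forall>x y z::'a. dist x y = dist (x + z) (y + z)"
    and "compact A"
  shows "compact {x - y | x y. x \<in> A \<and> y \<in> A}"
proof -
  have "2-lipschitz_on (A \<times> A) (\<lambda>p. fst p - snd p)"
  proof (rule lipschitz_onI)
    fix p q :: "'a \<times> 'a"
    have "dist (fst p - snd p) (fst q - snd q) \<le> dist (fst p) (fst q) + dist (snd p) (snd q)"
      by (rule dist_diff_diff_le[OF ti])
    then show "dist (fst p - snd p) (fst q - snd q) \<le> 2 * dist p q"
      using dist_fst_le[of p q] dist_snd_le[of p q] by linarith
  qed simp
  then have "compact ((\<lambda>p. fst p - snd p) ` (A \<times> A))"
    by (intro compact_continuous_image lipschitz_on_continuous_on compact_Times assms(2))
  moreover have "{x - y | x y. x \<in> A \<and> y \<in> A} = (\<lambda>p. fst p - snd p) ` (A \<times> A)"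
    by force
  ultimately show ?thesis by simp
qed

lemma infdist_less_imp_ex_dist_less:
  assumes "B \<noteq> {}" "infdist x B < d"
  obtains b where "b \<in> B" "dist x b < d"
proof -
  have "(INF b\<in>B. dist x b) < d" using assms by (simp add: infdist_notempty)
  then show ?thesis using assms(1) that by (auto simp: cINF_less_iff)
qed

lemma hausdorff_dist_commute: "hausdorff_dist A B = hausdorff_dist B A"
  unfolding hausdorff_dist_def by (rule max.commute)

lemma infdist_le_hausdorff_dist:
  assumes "compact A" "a \<in> A"
  shows "infdist a B \<le> hausdorff_dist A B"
proof -
  have "compact ((\<lambda>a. infdist a B) ` A)"
    by (intro compact_continuous_image continuous_intros assms(1))
  then have "infdist a B \<le> (SUP a\<in>A. infdist a B)"
    by (intro cSUP_upper assms(2) bounded_imp_bdd_above compact_imp_bounded)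
  then show ?thesis unfolding hausdorff_dist_def by linarith
qed

lemma hausdorff_dist_singleton_le:
  assumes "S \<noteq> {}" "\<forall>z\<in>S. dist z c \<le> r"
  shows "hausdorff_dist {c} S \<le> r"
proof -
  obtain z where "z \<in> S" using assms(1) by blast
  then have "infdist c S \<le> r"
    using assms(2) infdist_le[of z S c] by (auto simp: dist_commute)
  moreover have "(SUP b\<in>S. infdist b {c}) \<le> r"
    using assms by (intro cSUP_least) auto
  ultimately show ?thesis unfolding hausdorff_dist_def by simp
qed

lemma spectre_shift_near:
  fixes A B :: "'a::{metric_space, ab_group_add} set"
  assumes ti: "\<forall>x y z::'a. dist x y = dist (x + z) (y + z)"
    and "compact A" "A \<noteq> {}" "compact B" "B \<noteq> {}"
    and close: "hausdorff_dist A B < \<delta>"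
    and "z \<in> spectre B" "a \<in> A"
  shows "\<exists>a'\<in>A. dist (a + z) a' < 2 * \<delta> \<or> dist (a - z) a' < 2 * \<delta>"
proof -
  have near_B: "infdist a B < \<delta>"
    using infdist_le_hausdorff_dist[OF \<open>compact A\<close> \<open>a \<in> A\<close>, of B] close by linarith
  obtain b where b: "b \<in> B" "dist a b < \<delta>"
    using infdist_less_imp_ex_dist_less[OF \<open>B \<noteq> {}\<close> near_B] .
  have near_A: "\<exists>a'\<in>A. dist b' a' < \<delta>" if "b' \<in> B" for b'
  proof -
    have "infdist b' A < \<delta>"
      using infdist_le_hausdorff_dist[OF \<open>compact B\<close> that, of A] close
      by (simp add: hausdorff_dist_commute)
    then show ?thesis using infdist_less_imp_ex_dist_less[OF \<open>A \<noteq> {}\<close>] by metis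
  qed
  have "b + z \<in> B \<or> b - z \<in> B" using \<open>z \<in> spectre B\<close> b(1) unfolding spectre_def by blast
  then show ?thesis
  proof
    assume "b + z \<in> B"
    then obtain a' where "a' \<in> A" "dist (b + z) a' < \<delta>" using near_A by blast
    moreover have "dist (a + z) (b + z) \<le> dist a b" using dist_add_add_le[OF ti, of a z b z] by simp
    ultimately show ?thesis using b(2) dist_triangle[of "a + z" a' "b + z"] by force
  next
    assume "b - z \<in> B"
    then obtain a' where "a' \<in> A" "dist (b - z) a' < \<delta>" using near_A by blast
    moreover have "dist (a - z) (b - z) \<le> dist a b" using dist_diff_diff_le[OF ti, of a z b z] by simp
    ultimately show ?thesis using b(2) dist_triangle[of "a - z" a' "b - z"] by force
  qed
qed

definition spectre_defect :: "'a::{metric_space, ab_group_add} set \<Rightarrow> 'a \<Rightarrow> real" where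
  "spectre_defect A z = (SUP a\<in>A. min (infdist (a + z) A) (infdist (a - z) A))"

lemma bdd_above_spectre_defect:
  fixes A :: "'a::{metric_space, ab_group_add} set"
  assumes ti: "\<forall>x y z::'a. dist x y = dist (x + z) (y + z)"
  shows "bdd_above ((\<lambda>a. min (infdist (a + z) A) (infdist (a - z) A)) ` A)"
proof (rule bdd_aboveI2)
  fix a assume "a \<in> A"
  then have "infdist (a + z) A \<le> dist (a + z) a" by (rule infdist_le)
  also have "\<dots> = dist z 0" using ti[rule_format, of z 0 a] by (simp add: add.commute)
  finally show "min (infdist (a + z) A) (infdist (a - z) A) \<le> dist z 0" by linarith
qed

lemma spectre_defect_pos:
  fixes A :: "'a::{metric_space, ab_group_add} set"
  assumes ti: "\<forall>x y z::'a. dist x y = dist (x + z) (y + z)"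
    and "closed A" "A \<noteq> {}" "z \<notin> spectre A"
  shows "0 < spectre_defect A z"
proof -
  obtain a where "a \<in> A" "a + z \<notin> A" "a - z \<notin> A"
    using \<open>z \<notin> spectre A\<close> unfolding spectre_def by blast
  then have "0 < min (infdist (a + z) A) (infdist (a - z) A)"
    using infdist_pos_not_in_closed[OF \<open>closed A\<close> \<open>A \<noteq> {}\<close>] by simp
  also have "\<dots> \<le> spectre_defect A z"
    unfolding spectre_defect_def by (rule cSUP_upper[OF \<open>a \<in> A\<close> bdd_above_spectre_defect[OF ti]])
  finally show ?thesis .
qed

lemma lipschitz_spectre_defect:
  fixes A :: "'a::{metric_space, ab_group_add} set"
  assumes ti: "\<forall>x y z::'a. dist x y = dist (x + z) (y + z)"
    and "A \<noteq> {}"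
  shows "1-lipschitz_on UNIV (spectre_defect A)"
proof -
  have one_sided: "spectre_defect A w \<le> spectre_defect A z + dist w z" for w z
    unfolding spectre_defect_def
  proof (rule cSUP_least[OF \<open>A \<noteq> {}\<close>])
    fix a assume "a \<in> A"
    have "dist (a + w) (a + z) \<le> dist w z" "dist (a - w) (a - z) \<le> dist w z"
      using dist_add_add_le[OF ti, of a w a z] dist_diff_diff_le[OF ti, of a w a z] by simp_all
    then have "min (infdist (a + w) A) (infdist (a - w) A)
        \<le> min (infdist (a + z) A) (infdist (a - z) A) + dist w z"
      using infdist_triangle[of "a + w" A "a + z"] infdist_triangle[of "a - w" A "a - z"] by linarith
    also have "\<dots> \<le> (SUP a\<in>A. min (infdist (a + z) A) (infdist (a - z) A)) + dist w z"
      using cSUP_upper[OF \<open>a \<in> A\<close> bdd_above_spectre_defect[OF ti]] by simp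
    finally show "min (infdist (a + w) A) (infdist (a - w) A)
        \<le> (SUP a\<in>A. min (infdist (a + z) A) (infdist (a - z) A)) + dist w z" .
  qed
  show ?thesis
  proof (rule lipschitz_onI)
    fix w z :: 'a
    show "dist (spectre_defect A w) (spectre_defect A z) \<le> 1 * dist w z"
      using one_sided[of w z] one_sided[of z w] by (simp add: dist_real_def dist_commute abs_le_iff)
  qed simp
qed

lemma spectre_defect_le:
  fixes A B :: "'a::{metric_space, ab_group_add} set"
  assumes ti: "\<forall>x y z::'a. dist x y = dist (x + z) (y + z)"
    and "compact A" "A \<noteq> {}" "compact B" "B \<noteq> {}"
    and "hausdorff_dist A B < \<delta>" "z \<in> spectre B"
  shows "spectre_defect A z \<le> 2 * \<delta>"
  unfolding spectre_defect_def
proof (rule cSUP_least[OF \<open>A \<noteq> {}\<close>])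
  fix a assume "a \<in> A"
  then obtain a' where "a' \<in> A" "dist (a + z) a' < 2 * \<delta> \<or> dist (a - z) a' < 2 * \<delta>"
    using spectre_shift_near[OF assms] by blast
  then show "min (infdist (a + z) A) (infdist (a - z) A) \<le> 2 * \<delta>"
    using infdist_le[of a' A "a + z"] infdist_le[of a' A "a - z"] by linarith
qed

lemma spectre_near_differences:
  fixes A B :: "'a::{metric_space, ab_group_add} set"
  assumes ti: "\<forall>x y z::'a. dist x y = dist (x + z) (y + z)"
    and "compact A" "A \<noteq> {}" "compact B" "B \<noteq> {}"
    and "hausdorff_dist A B < \<delta>" "z \<in> spectre B"
  shows "\<exists>w\<in>{x - y | x y. x \<in> A \<and> y \<in> A}. dist z w < 2 * \<delta>"
proof -
  obtain a where "a \<in> A" using \<open>A \<noteq> {}\<close> by blast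
  then obtain a' where "a' \<in> A" and near: "dist (a + z) a' < 2 * \<delta> \<or> dist (a - z) a' < 2 * \<delta>"
    using spectre_shift_near[OF assms] by blast
  have "dist z (a' - a) = dist (a + z) a'"
    using ti[rule_format, of z "a' - a" a] by (simp add: add.commute)
  moreover have "dist z (a - a') = dist (a - z) a'"
    using ti[rule_format, of z "a - a'" "a' - z"] by (simp add: dist_commute)
  moreover have "a' - a \<in> {x - y | x y. x \<in> A \<and> y \<in> A}" "a - a' \<in> {x - y | x y. x \<in> A \<and> y \<in> A}"
    using \<open>a \<in> A\<close> \<open>a' \<in> A\<close> by blast+
  ultimately show ?thesis using near by (elim disjE) force+
qed

lemma compact_pos_lower_bound:
  fixes f :: "'a::topological_space \<Rightarrow> real"
  assumes "compact K" "continuous_on K f" "\<forall>x\<in>K. 0 < f x"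
  obtains m where "0 < m" "\<forall>x\<in>K. m \<le> f x"
proof (cases "K = {}")
  case False
  then obtain x0 where "x0 \<in> K" "\<forall>x\<in>K. f x0 \<le> f x"
    using continuous_attains_inf[OF assms(1) _ assms(2)] by blast
  then show ?thesis using that assms(3) by blast
qed (use that[of 1] in simp)

lemma small_spectre_defect_imp_near_zero:
  fixes A :: "'a::{metric_space, ab_group_add} set"
  assumes ti: "\<forall>x y z::'a. dist x y = dist (x + z) (y + z)"
    and "compact A" "A \<noteq> {}" "spectre A = {0}" "0 < \<epsilon>"
  obtains m where "0 < m"
    "\<forall>w\<in>{x - y | x y. x \<in> A \<and> y \<in> A}. spectre_defect A w < m \<longrightarrow> dist w 0 < \<epsilon>"
proof -
  let ?K = "{x - y | x y. x \<in> A \<and> y \<in> A} \<inter> - ball 0 \<epsilon>"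
  have "compact ?K"
    by (intro compact_Int_closed compact_differences_invariant[OF ti \<open>compact A\<close>] closed_Compl open_ball)
  moreover have "continuous_on ?K (spectre_defect A)"
    using lipschitz_on_continuous_on[OF lipschitz_spectre_defect[OF ti \<open>A \<noteq> {}\<close>]]
    by (rule continuous_on_subset) simp
  moreover have "\<forall>w\<in>?K. 0 < spectre_defect A w"
  proof
    fix w assume "w \<in> ?K"
    then have "w \<notin> spectre A" using \<open>spectre A = {0}\<close> \<open>0 < \<epsilon>\<close> by force
    then show "0 < spectre_defect A w"
      by (rule spectre_defect_pos[OF ti compact_imp_closed[OF \<open>compact A\<close>] \<open>A \<noteq> {}\<close>])
  qed
  ultimately obtain m where "0 < m" and lower: "\<forall>w\<in>?K. m \<le> spectre_defect A w"
    by (rule compact_pos_lower_bound)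
  show ?thesis
  proof (rule that[OF \<open>0 < m\<close>], intro ballI impI)
    fix w assume "w \<in> {x - y | x y. x \<in> A \<and> y \<in> A}" "spectre_defect A w < m"
    then show "dist w 0 < \<epsilon>" using lower by (force simp: dist_commute)
  qed
qed

theorem corollary3p9:
  fixes A :: "'a::{metric_space, ab_group_add} set"
  assumes transl_inv: "\<forall>x y z::'a. dist x y = dist (x + z) (y + z)"
    and complete_X: "complete (UNIV :: 'a set)"
    and loc_compact: "locally compact (UNIV :: 'a set)"
    and A_compact: "compact A" and A_ne: "A \<noteq> {}"
    and spectre_A: "spectre A = {0}"
  shows "\<forall>\<epsilon>>0. \<exists>\<delta>>0. \<forall>B. compact B \<and> B \<noteq> {} \<and> hausdorff_dist A B < \<delta>
           \<longrightarrow> hausdorff_dist (spectre A) (spectre B) < \<epsilon>"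
proof (intro allI impI)
  fix \<epsilon> :: real assume "0 < \<epsilon>"
  then obtain m where "0 < m" and small:
    "\<forall>w\<in>{x - y | x y. x \<in> A \<and> y \<in> A}. spectre_defect A w < m \<longrightarrow> dist w 0 < \<epsilon> / 4"
    using small_spectre_defect_imp_near_zero[OF transl_inv A_compact A_ne spectre_A, of "\<epsilon> / 4"] by auto
  define \<delta> where "\<delta> = min (m / 4) (\<epsilon> / 8)"
  have "0 < \<delta>" "\<delta> \<le> m / 4" "\<delta> \<le> \<epsilon> / 8" using \<open>0 < m\<close> \<open>0 < \<epsilon>\<close> by (simp_all add: \<delta>_def)
  have "hausdorff_dist (spectre A) (spectre B) < \<epsilon>"
    if B: "compact B" "B \<noteq> {}" "hausdorff_dist A B < \<delta>" for B
  proof -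
    have "dist z 0 \<le> \<epsilon> / 2" if "z \<in> spectre B" for z
    proof -
      note hyps = transl_inv A_compact A_ne B that
      obtain w where w: "w \<in> {x - y | x y. x \<in> A \<and> y \<in> A}" "dist z w < 2 * \<delta>"
        using spectre_near_differences[OF hyps] by blast
      have "spectre_defect A w \<le> spectre_defect A z + dist z w"
        using lipschitz_onD[OF lipschitz_spectre_defect[OF transl_inv A_ne], of w z]
        by (simp add: dist_real_def abs_le_iff dist_commute)
      then have "spectre_defect A w < m"
        using spectre_defect_le[OF hyps] w(2) \<open>\<delta> \<le> m / 4\<close> by linarith
      then have "dist w 0 < \<epsilon> / 4" using small w(1) by blast
      then show ?thesis using dist_triangle[of z 0 w] w(2) \<open>\<delta> \<le> \<epsilon> / 8\<close> by linarith
    qed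
    moreover have "0 \<in> spectre B" by (simp add: spectre_def)
    ultimately have "hausdorff_dist {0} (spectre B) \<le> \<epsilon> / 2"
      by (intro hausdorff_dist_singleton_le) blast+
    then show ?thesis using spectre_A \<open>0 < \<epsilon>\<close> by simp
  qed
  then show "\<exists>\<delta>>0. \<forall>B. compact B \<and> B \<noteq> {} \<and> hausdorff_dist A B < \<delta>
           \<longrightarrow> hausdorff_dist (spectre A) (spectre B) < \<epsilon>"
    using \<open>0 < \<delta>\<close> by blast
qed

end
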